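(* Let $G$ be a connected graph of order $n\geq 5$ and let $k$ be an integer with $3\leq k\leq n$. Then $px_k(G)=n-2$ if and only if $G\cong S_n^+$ or $G\cong G_0$, where $S_n^+$ is the graph obtained from the star $S_n=K_{1,n-1}$ by adding one edge joining two of its leaves, and $G_0$ is the tree on $n$ vertices obtained from the star $K_{1,n-2}$ by attaching one new pendant vertex to one of its leaves (equivalently, obtained from $K_{1,n-1}$ by subdividing one edge once and deleting a leaf; it is the unique tree on $n$ vertices with maximum degree $n-2$).
   Context: All graphs are finite, simple, undirected and connected. An edge-coloring of a graph assigns a color to each edge (adjacent edges may receive the same color). A tree in an edge-colored graph is proper if any two adjacent edges of the tree receive different colors. For $S\subseteq V(G)$, an $S$-tree is a subgraph of $G$ that is a tree containing all vertices of $S$. For a connected graph $G$ of order $n$ and an integer $k$ with $2\le k\le n$, an edge-coloring of $G$ is a $k$-proper coloring if for every set $S$ of $k$ vertices of $G$ there exists a proper $S$-tree in $G$. The $k$-proper index $px_k(G)$ is the minimum number of colors used in a $k$-proper coloring of $G$. *)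

theory Defs
  imports Main
begin

definition simple_graph :: "'a set \<Rightarrow> 'a set set \<Rightarrow> bool" where
  "simple_graph V E \<longleftrightarrow> finite V \<and>
     (\<forall>e\<in>E. \<exists>u v. u \<noteq> v \<and> e = {u, v} \<and> u \<in> V \<and> v \<in> V)"

definition connected_graph :: "'a set \<Rightarrow> 'a set set \<Rightarrow> bool" where
  "connected_graph V E \<longleftrightarrow> V \<noteq> {} \<and>
     (\<forall>u\<in>V. \<forall>v\<in>V. (\<lambda>x y. {x, y} \<in> E)\<^sup>*\<^sup>* u v)"

definition has_cycle :: "'a set \<Rightarrow> 'a set set \<Rightarrow> bool" where
  "has_cycle V E \<longleftrightarrow> (\<exists>xs. length xs \<ge> 3 \<and> distinct xs \<and> set xs \<subseteq> V \<and>
     (\<forall>i. Suc i < length xs \<longrightarrow> {xs ! i, xs ! Suc i} \<in> E) \<and>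
     {last xs, hd xs} \<in> E)"

definition is_tree :: "'a set \<Rightarrow> 'a set set \<Rightarrow> bool" where
  "is_tree V E \<longleftrightarrow> simple_graph V E \<and> connected_graph V E \<and> \<not> has_cycle V E"

definition subgraph :: "'a set \<Rightarrow> 'a set set \<Rightarrow> 'a set \<Rightarrow> 'a set set \<Rightarrow> bool" where
  "subgraph VT ET V E \<longleftrightarrow> VT \<subseteq> V \<and> ET \<subseteq> E \<and> (\<forall>e\<in>ET. e \<subseteq> VT)"

definition proper_edges :: "('a set \<Rightarrow> 'c) \<Rightarrow> 'a set set \<Rightarrow> bool" where
  "proper_edges c ET \<longleftrightarrow> (\<forall>e\<in>ET. \<forall>f\<in>ET. e \<noteq> f \<and> e \<inter> f \<noteq> {} \<longrightarrow> c e \<noteq> c f)"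

definition proper_S_tree_exists ::
  "'a set \<Rightarrow> 'a set set \<Rightarrow> ('a set \<Rightarrow> 'c) \<Rightarrow> 'a set \<Rightarrow> bool" where
  "proper_S_tree_exists V E c S \<longleftrightarrow>
     (\<exists>VT ET. subgraph VT ET V E \<and> is_tree VT ET \<and> S \<subseteq> VT \<and> proper_edges c ET)"

definition k_proper_coloring :: "nat \<Rightarrow> 'a set \<Rightarrow> 'a set set \<Rightarrow> ('a set \<Rightarrow> nat) \<Rightarrow> bool" where
  "k_proper_coloring k V E c \<longleftrightarrow>
     (\<forall>S. S \<subseteq> V \<and> card S = k \<longrightarrow> proper_S_tree_exists V E c S)"

definition px :: "nat \<Rightarrow> 'a set \<Rightarrow> 'a set set \<Rightarrow> nat" where
  "px k V E = (LEAST m. \<exists>c. k_proper_coloring k V E c \<and> card (c ` E) = m)"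

definition graph_iso :: "'a set \<Rightarrow> 'a set set \<Rightarrow> 'b set \<Rightarrow> 'b set set \<Rightarrow> bool" where
  "graph_iso V E V' E' \<longleftrightarrow> (\<exists>f. bij_betw f V V' \<and>
     (\<forall>u\<in>V. \<forall>v\<in>V. {u, v} \<in> E \<longleftrightarrow> {f u, f v} \<in> E'))"

definition Splus_edges :: "nat \<Rightarrow> nat set set" where
  "Splus_edges n = {{0, i} | i. i \<in> {1..<n}} \<union> {{1, 2}}"

definition G0_edges :: "nat \<Rightarrow> nat set set" where
  "G0_edges n = {{0, i} | i. i \<in> {1..<n-1}} \<union> {{n-2, n-1}}"

end

theory Submission
  imports Defs
begin

text \<open>
  Upper bounds come from spanning trees. A spanning tree of maximum degree D can be properly
  coloured with D colours, and since it contains every vertex it is a proper S-tree for every S.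
  Growing a spanning tree from a subtree on p vertices of maximum degree d, without further edges
  inside the seed and so that every other vertex has at most one seed neighbour, keeps all
  degrees at most n - p + d. A path on four vertices therefore gives px_k \<le> n - 2, and a path on
  five vertices or a double star (two adjacent centres with two further leaves each) gives
  px_k \<le> n - 3.

  Lower bounds come from bridges: if xy is the only edge leaving a vertex set A, every tree
  meeting both A and its complement contains xy. Edges at a common vertex that are bridges in
  this sense for pairwise separated sets therefore get distinct colours; this gives n - 1 colours
  for the star and n - 2 for S_n^+ and G_0.

  Finally, a connected graph on at least five vertices containing neither a path on five
  vertices nor a double star is a star, S_n^+ or G_0.
\<close>

lemma simple_graph_edgeD:
  assumes "simple_graph V E" and "{a, b} \<in> E"
  shows "a \<in> V" and "b \<in> V" and "a \<noteq> b"
proof -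
  obtain u v where "u \<noteq> v" "{a, b} = {u, v}" "u \<in> V" "v \<in> V"
    using assms unfolding simple_graph_def by blast
  then show "a \<in> V" "b \<in> V" "a \<noteq> b"
    by (auto simp: doubleton_eq_iff)
qed

lemma simple_graph_edge_subset:
  assumes "simple_graph V E" and "e \<in> E"
  shows "e \<subseteq> V"
proof -
  obtain u v where "e = {u, v}" "u \<in> V" "v \<in> V"
    using assms unfolding simple_graph_def by blast
  then show ?thesis by simp
qed

lemma simple_graph_edge_other_end:
  assumes "simple_graph V E" and "e \<in> E" and "v \<in> e"
  obtains w where "w \<in> V" "w \<noteq> v" "e = {v, w}"
proof -
  obtain a b where ab: "a \<noteq> b" "e = {a, b}" "a \<in> V" "b \<in> V"
    using assms(1,2) unfolding simple_graph_def by blast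
  show ?thesis
  proof (cases "v = a")
    case True
    with ab show ?thesis
      using that by simp
  next
    case False
    with ab assms(3) have "v = b" "e = {v, a}"
      by (auto simp: insert_commute)
    with ab show ?thesis
      using that by simp
  qed
qed

lemma simple_graph_finite_edges:
  assumes "simple_graph V E"
  shows "finite E"
proof (rule finite_subset)
  show "E \<subseteq> Pow V"
    using simple_graph_edge_subset[OF assms] by blast
  show "finite (Pow V)"
    using assms unfolding simple_graph_def by simp
qed

lemma rtranclp_leaves_set:
  "R\<^sup>*\<^sup>* x y \<Longrightarrow> x \<in> A \<Longrightarrow> y \<notin> A \<Longrightarrow> \<exists>a b. R a b \<and> a \<in> A \<and> b \<notin> A"
  by (induction rule: rtranclp_induct) auto

lemma connected_graph_edge_leaving:
  assumes "connected_graph V E" and "x \<in> V" and "x \<in> A" and "y \<in> V" and "y \<notin> A"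
  obtains a b where "{a, b} \<in> E" "a \<in> A" "b \<notin> A"
proof -
  have "(\<lambda>a b. {a, b} \<in> E)\<^sup>*\<^sup>* x y"
    using assms unfolding connected_graph_def by blast
  from rtranclp_leaves_set[OF this assms(3,5)] show ?thesis
    using that by blast
qed

definition degree :: "'a set set \<Rightarrow> 'a \<Rightarrow> nat" where
  "degree E v = card {e \<in> E. v \<in> e}"

lemma degree_insert:
  assumes "finite E"
  shows "degree (insert e E) v = (if v \<in> e \<and> e \<notin> E then Suc (degree E v) else degree E v)"
proof -
  have "{f \<in> insert e E. v \<in> f} = (if v \<in> e then insert e {f \<in> E. v \<in> f} else {f \<in> E. v \<in> f})"
    by auto
  with assms show ?thesis
    by (auto simp: degree_def card_insert_if)
qed

lemma degree_le_card_neighbours: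
  assumes "finite N" and "\<And>e. e \<in> E \<Longrightarrow> v \<in> e \<Longrightarrow> \<exists>w \<in> N. e = {v, w}"
  shows "degree E v \<le> card N"
proof -
  have "{e \<in> E. v \<in> e} \<subseteq> (\<lambda>w. {v, w}) ` N"
    using assms(2) by blast
  then have "degree E v \<le> card ((\<lambda>w. {v, w}) ` N)"
    unfolding degree_def using assms(1) by (intro card_mono) auto
  also have "\<dots> \<le> card N"
    using assms(1) by (rule card_image_le)
  finally show ?thesis .
qed

lemma degree_set_le_length_filter:
  "degree (set es) v \<le> length (filter (\<lambda>e. v \<in> e) es)"
proof -
  have "{e \<in> set es. v \<in> e} = set (filter (\<lambda>e. v \<in> e) es)"
    by auto
  then show ?thesis
    unfolding degree_def by (metis card_length)
qed

section \<open>Trees grown leaf by leaf\<close>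

inductive leaf_tree :: "'a set \<Rightarrow> 'a set set \<Rightarrow> bool" where
  single: "leaf_tree {v} {}"
| add_leaf: "leaf_tree V E \<Longrightarrow> u \<in> V \<Longrightarrow> w \<notin> V \<Longrightarrow> leaf_tree (insert w V) (insert {u, w} E)"

lemma leaf_tree_simple_graph: "leaf_tree V E \<Longrightarrow> simple_graph V E"
proof (induction rule: leaf_tree.induct)
  case (single v)
  then show ?case by (simp add: simple_graph_def)
next
  case (add_leaf V E u w)
  then have "u \<noteq> w"
    by blast
  then have "\<exists>a b. a \<noteq> b \<and> {u, w} = {a, b} \<and> a \<in> insert w V \<and> b \<in> insert w V"
    using add_leaf.hyps(2) by blast
  moreover have "\<forall>e\<in>E. \<exists>a b. a \<noteq> b \<and> e = {a, b} \<and> a \<in> insert w V \<and> b \<in> insert w V"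
    using add_leaf.IH unfolding simple_graph_def by blast
  ultimately show ?case
    using add_leaf.IH unfolding simple_graph_def by simp
qed

lemma leaf_tree_nonempty: "leaf_tree V E \<Longrightarrow> V \<noteq> {}"
  by (induction rule: leaf_tree.induct) auto

lemma leaf_tree_edge_subset: "leaf_tree V E \<Longrightarrow> e \<in> E \<Longrightarrow> e \<subseteq> V"
  using leaf_tree_simple_graph simple_graph_edge_subset by blast

lemma leaf_tree_connected: "leaf_tree V E \<Longrightarrow> connected_graph V E"
proof (induction rule: leaf_tree.induct)
  case (single v)
  then show ?case by (simp add: connected_graph_def)
next
  case (add_leaf V E u w)
  let ?R = "\<lambda>x y. {x, y} \<in> insert {u, w} E"
  have old: "?R\<^sup>*\<^sup>* a b" if "a \<in> V" "b \<in> V" for a b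
  proof -
    have "(\<lambda>x y. {x, y} \<in> E)\<^sup>*\<^sup>* a b"
      using add_leaf.IH that unfolding connected_graph_def by blast
    then show ?thesis
      by (rule mono_rtranclp[rule_format, rotated]) auto
  qed
  have "?R\<^sup>*\<^sup>* a w" if "a \<in> V" for a
    using old[OF that add_leaf.hyps(2)] by (rule rtranclp.rtrancl_into_rtrancl) simp
  moreover have "?R\<^sup>*\<^sup>* w b" if "b \<in> V" for b
  proof -
    have "?R w u" by (simp add: insert_commute)
    then show ?thesis
      using old[OF add_leaf.hyps(2) that] by (rule converse_rtranclp_into_rtranclp)
  qed
  moreover have "?R\<^sup>*\<^sup>* w w"
    by simp
  ultimately show ?case
    using old unfolding connected_graph_def by blast
qed

lemma cycle_vertex_two_neighbours:
  assumes L: "length xs \<ge> 3" and d: "distinct xs"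
    and path: "\<forall>i. Suc i < length xs \<longrightarrow> {xs ! i, xs ! Suc i} \<in> E"
    and close: "{last xs, hd xs} \<in> E" and x: "x \<in> set xs"
  shows "\<exists>a b. a \<noteq> b \<and> a \<noteq> x \<and> b \<noteq> x \<and> {x, a} \<in> E \<and> {b, x} \<in> E"
proof -
  obtain j where j: "j < length xs" "xs ! j = x"
    using x by (auto simp: in_set_conv_nth)
  define nxt where "nxt = (if Suc j < length xs then Suc j else 0)"
  define prv where "prv = (if j > 0 then j - 1 else length xs - 1)"
  have idx: "nxt < length xs" "prv < length xs" "nxt \<noteq> j" "prv \<noteq> j" "nxt \<noteq> prv"
    using L j unfolding nxt_def prv_def by auto
  have "xs \<noteq> []" using L by auto
  then have ends: "last xs = xs ! (length xs - 1)" "hd xs = xs ! 0"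
    by (simp_all add: last_conv_nth hd_conv_nth)
  have "{x, xs ! nxt} \<in> E"
  proof (cases "Suc j < length xs")
    case True
    then show ?thesis
      using path j unfolding nxt_def by auto
  next
    case False
    then have "j = length xs - 1"
      using j by simp
    then show ?thesis
      using close j ends False unfolding nxt_def by simp
  qed
  moreover have "{xs ! prv, x} \<in> E"
  proof (cases "j > 0")
    case True
    then show ?thesis
      using path[rule_format, of "j - 1"] j unfolding prv_def by simp
  next
    case False
    then show ?thesis
      using close j ends unfolding prv_def by simp
  qed
  moreover have "xs ! nxt \<noteq> xs ! prv" "xs ! nxt \<noteq> xs ! j" "xs ! prv \<noteq> xs ! j"
    using d idx j(1) by (simp_all add: nth_eq_iff_index_eq)
  ultimately show ?thesis
    using j(2) by (intro exI[of _ "xs ! nxt"] exI[of _ "xs ! prv"]) simp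
qed

lemma leaf_tree_acyclic: "leaf_tree V E \<Longrightarrow> \<not> has_cycle V E"
proof (induction rule: leaf_tree.induct)
  case (single v)
  then show ?case by (simp add: has_cycle_def)
next
  case (add_leaf V E u w)
  have w_fresh: "w \<notin> e" if "e \<in> E" for e
    using leaf_tree_edge_subset[OF add_leaf.hyps(1) that] add_leaf.hyps(3) by blast
  show ?case
  proof
    assume "has_cycle (insert w V) (insert {u, w} E)"
    then obtain xs where L: "length xs \<ge> 3" and d: "distinct xs" and s: "set xs \<subseteq> insert w V"
      and path: "\<forall>i. Suc i < length xs \<longrightarrow> {xs ! i, xs ! Suc i} \<in> insert {u, w} E"
      and close: "{last xs, hd xs} \<in> insert {u, w} E"
      unfolding has_cycle_def by blast
    show False
    proof (cases "w \<in> set xs")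
      case True
      \<comment> \<open>a fresh leaf has only one neighbour, but every cycle vertex has two\<close>
      obtain a b where ab: "a \<noteq> b" "a \<noteq> w" "b \<noteq> w"
        "{w, a} \<in> insert {u, w} E" "{b, w} \<in> insert {u, w} E"
        using cycle_vertex_two_neighbours[OF L d path close True] by blast
      have "{w, a} = {u, w}" "{b, w} = {u, w}"
        using ab(4,5) w_fresh by auto
      then have "a = u" "b = u"
        using ab(2,3) by (auto simp: doubleton_eq_iff)
      with ab(1) show False
        by simp
    next
      case False
      have "{xs ! i, xs ! Suc i} \<in> E" if i: "Suc i < length xs" for i
      proof -
        have "w \<notin> {xs ! i, xs ! Suc i}"
          using False i nth_mem[of i xs] nth_mem[of "Suc i" xs] by auto
        then show ?thesis
          using path i by auto
      qed
      moreover have "{last xs, hd xs} \<in> E"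
      proof -
        have "xs \<noteq> []" using L by auto
        then have "w \<notin> {last xs, hd xs}"
          using False by auto
        then show ?thesis
          using close by auto
      qed
      moreover have "set xs \<subseteq> V"
        using s False by auto
      ultimately have "has_cycle V E"
        unfolding has_cycle_def using L d by (intro exI[of _ xs]) blast
      with add_leaf.IH show False ..
    qed
  qed
qed

lemma leaf_tree_is_tree: "leaf_tree V E \<Longrightarrow> is_tree V E"
  by (simp add: is_tree_def leaf_tree_simple_graph leaf_tree_connected leaf_tree_acyclic)

lemma ex_less_notin_card_less:
  assumes "finite A" and "card A < D"
  shows "\<exists>\<alpha> < D. \<alpha> \<notin> A"
proof (rule ccontr)
  assume "\<not> ?thesis"
  then have "{..<D} \<subseteq> A" by auto
  with assms show False
    using card_mono[of A "{..<D}"] by simp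
qed

lemma proper_edges_add_pendant:
  assumes proper: "proper_edges c E" and fresh: "\<forall>f \<in> E. w \<notin> f"
    and \<alpha>: "\<forall>f \<in> E. u \<in> f \<longrightarrow> c f \<noteq> \<alpha>"
  shows "proper_edges (c({u, w} := \<alpha>)) (insert {u, w} E)"
  unfolding proper_edges_def
proof (intro ballI impI)
  fix e f
  assume e: "e \<in> insert {u, w} E" and f: "f \<in> insert {u, w} E" and ef: "e \<noteq> f \<and> e \<inter> f \<noteq> {}"
  have new: "{u, w} \<notin> E"
    using fresh by blast
  consider "e = {u, w}" "f \<in> E" | "f = {u, w}" "e \<in> E" | "e \<in> E" "f \<in> E"
    using e f ef by auto
  then show "(c({u, w} := \<alpha>)) e \<noteq> (c({u, w} := \<alpha>)) f"
  proof cases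
    case 1
    then have "u \<in> f"
      using fresh ef by blast
    with 1 \<alpha> new show ?thesis
      by auto
  next
    case 2
    then have "u \<in> e"
      using fresh ef by blast
    with 2 \<alpha> new show ?thesis
      by auto
  next
    case 3
    with proper ef new show ?thesis
      unfolding proper_edges_def by auto
  qed
qed

lemma leaf_tree_proper_colouring:
  assumes "leaf_tree V E" and "\<forall>v. degree E v \<le> D"
  shows "\<exists>c :: 'a set \<Rightarrow> nat. proper_edges c E \<and> c ` E \<subseteq> {..<D}"
  using assms
proof (induction rule: leaf_tree.induct)
  case (single v)
  then show ?case by (simp add: proper_edges_def)
next
  case (add_leaf V E u w)
  have fin: "finite E"
    using add_leaf.hyps(1) leaf_tree_simple_graph simple_graph_finite_edges by blast
  have fresh: "\<forall>f \<in> E. w \<notin> f"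
    using leaf_tree_edge_subset[OF add_leaf.hyps(1)] add_leaf.hyps(3) by blast
  then have deg: "degree (insert {u, w} E) v = (if v \<in> {u, w} then Suc (degree E v) else degree E v)" for v
    using degree_insert[OF fin] by auto
  have "\<forall>v. degree E v \<le> D"
  proof
    fix v
    show "degree E v \<le> D"
      using add_leaf.prems[rule_format, of v] deg[of v] by (simp split: if_splits)
  qed
  then obtain c :: "'a set \<Rightarrow> nat" where c: "proper_edges c E" "c ` E \<subseteq> {..<D}"
    using add_leaf.IH by blast
  define Cu where "Cu = {f \<in> E. u \<in> f}"
  have "Suc (card Cu) \<le> D"
    using add_leaf.prems[rule_format, of u] deg[of u] unfolding Cu_def degree_def by simp
  then have "card (c ` Cu) < D"
    using card_image_le[of Cu c] fin unfolding Cu_def by simp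
  moreover have "finite (c ` Cu)"
    using fin unfolding Cu_def by simp
  ultimately obtain \<alpha> where \<alpha>: "\<alpha> < D" "\<alpha> \<notin> c ` Cu"
    using ex_less_notin_card_less by blast
  then have "\<forall>f \<in> E. u \<in> f \<longrightarrow> c f \<noteq> \<alpha>"
    unfolding Cu_def by blast
  then have "proper_edges (c({u, w} := \<alpha>)) (insert {u, w} E)"
    by (rule proper_edges_add_pendant[OF c(1) fresh])
  moreover have "(c({u, w} := \<alpha>)) ` insert {u, w} E \<subseteq> {..<D}"
    using c(2) \<alpha>(1) by auto
  ultimately show ?case
    by blast
qed

section \<open>Upper bounds from spanning trees around a seed\<close>

text \<open>The two conditions on the added edges are what bounds every degree in the extended tree
  by card V - card VS plus the maximum degree of the seed.\<close>

definition extends_seed :: "'a set \<Rightarrow> 'a set set \<Rightarrow> 'a set set \<Rightarrow> bool" where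
  "extends_seed VS ES ET \<longleftrightarrow> ES \<subseteq> ET \<and> (\<forall>e \<in> ET - ES. \<not> e \<subseteq> VS) \<and>
     (\<forall>w a b. w \<notin> VS \<longrightarrow> a \<in> VS \<longrightarrow> b \<in> VS \<longrightarrow> {a, w} \<in> ET \<longrightarrow> {b, w} \<in> ET \<longrightarrow> a = b)"

lemma extends_seed_refl:
  assumes "leaf_tree VS ES"
  shows "extends_seed VS ES ES"
proof -
  have "w \<in> VS" if "{a, w} \<in> ES" for a w
    using leaf_tree_edge_subset[OF assms that] by simp
  then show ?thesis
    unfolding extends_seed_def by blast
qed

lemma extends_seed_add_leaf:
  assumes ext: "extends_seed VS ES ET" and sub: "VS \<subseteq> VT" "\<forall>e \<in> ET. e \<subseteq> VT"
    and a: "a \<in> VT" and b: "b \<notin> VT"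
  shows "extends_seed VS ES (insert {a, b} ET)"
proof -
  have ES: "ES \<subseteq> ET" and chords: "\<forall>e \<in> ET - ES. \<not> e \<subseteq> VS"
    and unique: "\<And>w a b. w \<notin> VS \<Longrightarrow> a \<in> VS \<Longrightarrow> b \<in> VS \<Longrightarrow> {a, w} \<in> ET \<Longrightarrow> {b, w} \<in> ET \<Longrightarrow> a = b"
    using ext unfolding extends_seed_def by blast+
  have "\<not> {a, b} \<subseteq> VS"
    using sub b by blast
  with chords have chords': "\<forall>e \<in> insert {a, b} ET - ES. \<not> e \<subseteq> VS"
    by blast
  have unique': "a' = b'"
    if w: "w \<notin> VS" and a'b': "a' \<in> VS" "b' \<in> VS"
      and edges: "{a', w} \<in> insert {a, b} ET" "{b', w} \<in> insert {a, b} ET" for w a' b'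
  proof -
    have "a' \<noteq> b" "b' \<noteq> b"
      using a'b' sub b by auto
    show "a' = b'"
    proof (cases "w = b")
      case True
      then have "{a', w} \<notin> ET" "{b', w} \<notin> ET"
        using sub b by auto
      then have "{a', w} = {a, b}" "{b', w} = {a, b}"
        using edges by auto
      then show ?thesis
        using True \<open>a' \<noteq> b\<close> \<open>b' \<noteq> b\<close> by (auto simp: doubleton_eq_iff)
    next
      case False
      then have "{a', w} \<noteq> {a, b}" "{b', w} \<noteq> {a, b}"
        using \<open>a' \<noteq> b\<close> \<open>b' \<noteq> b\<close> by (auto simp: doubleton_eq_iff)
      then show ?thesis
        using unique[OF w a'b'] edges by simp
    qed
  qed
  show ?thesis
    unfolding extends_seed_def using ES chords' unique' by blast
qed

lemma leaf_tree_extend_spanning: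
  assumes sg: "simple_graph V E" and cg: "connected_graph V E"
  shows "leaf_tree VT ET \<Longrightarrow> VS \<subseteq> VT \<Longrightarrow> VT \<subseteq> V \<Longrightarrow> ET \<subseteq> E \<Longrightarrow> extends_seed VS ES ET \<Longrightarrow>
    \<exists>ET'. leaf_tree V ET' \<and> ET' \<subseteq> E \<and> extends_seed VS ES ET'"
proof (induction "card (V - VT)" arbitrary: VT ET rule: less_induct)
  case less
  show ?case
  proof (cases "VT = V")
    case True
    then show ?thesis
      using less.prems(1,4,5) by blast
  next
    case False
    then obtain y where y: "y \<in> V" "y \<notin> VT"
      using less.prems(3) by blast
    obtain x where x: "x \<in> VT"
      using leaf_tree_nonempty[OF less.prems(1)] by blast
    with less.prems(3) have "x \<in> V"
      by blast
    then obtain a b where ab: "{a, b} \<in> E" "a \<in> VT" "b \<notin> VT"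
      using connected_graph_edge_leaving[OF cg _ x y] by blast
    have "b \<in> V"
      using simple_graph_edgeD[OF sg ab(1)] by simp
    have "finite V"
      using sg unfolding simple_graph_def by blast
    then have smaller: "card (V - insert b VT) < card (V - VT)"
      using \<open>b \<in> V\<close> ab(3) by (intro psubset_card_mono) auto
    have tree: "leaf_tree (insert b VT) (insert {a, b} ET)"
      using less.prems(1) ab(2,3) by (rule leaf_tree.add_leaf)
    have ext: "extends_seed VS ES (insert {a, b} ET)"
      using less.prems(5,2) leaf_tree_edge_subset[OF less.prems(1)] ab(2,3)
      by (intro extends_seed_add_leaf) auto
    have "VS \<subseteq> insert b VT" "insert b VT \<subseteq> V" "insert {a, b} ET \<subseteq> E"
      using less.prems(2-4) ab(1) \<open>b \<in> V\<close> by auto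
    then show ?thesis
      using less.hyps[OF smaller tree _ _ _ ext] by blast
  qed
qed

lemma extends_seed_degree_le_seed:
  assumes sg: "simple_graph V ET" and ext: "extends_seed VS ES ET" and v: "v \<in> VS"
  shows "degree ET v \<le> degree ES v + card (V - VS)"
proof -
  have "degree (ET - ES) v \<le> card (V - VS)"
  proof (rule degree_le_card_neighbours)
    fix e
    assume e: "e \<in> ET - ES" "v \<in> e"
    then obtain w where w: "w \<in> V" "e = {v, w}"
      using simple_graph_edge_other_end[OF sg] by blast
    moreover have "\<not> e \<subseteq> VS"
      using ext e(1) unfolding extends_seed_def by blast
    ultimately show "\<exists>w \<in> V - VS. e = {v, w}"
      using v by blast
  qed (use sg in \<open>simp add: simple_graph_def\<close>)
  moreover have "{e \<in> ET. v \<in> e} = {e \<in> ES. v \<in> e} \<union> {e \<in> ET - ES. v \<in> e}"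
    using ext unfolding extends_seed_def by blast
  then have "degree ET v \<le> degree ES v + degree (ET - ES) v"
    unfolding degree_def by (metis card_Un_le)
  ultimately show ?thesis
    by linarith
qed

lemma extends_seed_degree_le_outside:
  assumes sg: "simple_graph V ET" and ext: "extends_seed VS ES ET" and VS: "VS \<subseteq> V"
    and v: "v \<in> V - VS"
  shows "degree ET v \<le> card (V - VS)"
proof -
  have finV: "finite V"
    using sg unfolding simple_graph_def by blast
  define Q where "Q = {a \<in> VS. {a, v} \<in> ET}"
  have finQ: "finite Q"
    using finite_subset[OF VS finV] unfolding Q_def by simp
  moreover have "\<forall>a \<in> Q. \<forall>b \<in> Q. a = b"
    using ext v unfolding Q_def extends_seed_def by blast
  ultimately have "card Q \<le> 1"
    by (simp add: card_le_Suc0_iff_eq)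
  have "degree ET v \<le> card ((V - VS - {v}) \<union> Q)"
  proof (rule degree_le_card_neighbours)
    fix e
    assume e: "e \<in> ET" "v \<in> e"
    then obtain w where w: "w \<in> V" "w \<noteq> v" "e = {v, w}"
      using simple_graph_edge_other_end[OF sg] by blast
    then have "w \<in> (V - VS - {v}) \<union> Q"
      using e(1) unfolding Q_def by (auto simp: insert_commute)
    with w show "\<exists>w \<in> (V - VS - {v}) \<union> Q. e = {v, w}"
      by blast
  qed (use finV finQ in simp)
  also have "\<dots> \<le> card (V - VS - {v}) + card Q"
    by (rule card_Un_le)
  also have "\<dots> \<le> card (V - VS)"
  proof -
    have "card (V - VS - {v}) = card (V - VS) - 1" "card (V - VS) > 0"
      using v finV by (auto simp: card_gt_0_iff)
    then show ?thesis
      using \<open>card Q \<le> 1\<close> by linarith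
  qed
  finally show ?thesis .
qed

lemma extends_seed_degree_le:
  assumes sg: "simple_graph V ET" and ext: "extends_seed VS ES ET" and VS: "VS \<subseteq> V"
    and deg: "\<forall>v. degree ES v \<le> d"
  shows "degree ET v \<le> card V + d - card VS"
proof -
  have finV: "finite V"
    using sg unfolding simple_graph_def by blast
  have cardVS: "card (V - VS) = card V - card VS" "card VS \<le> card V"
    using card_Diff_subset[OF finite_subset[OF VS finV] VS] card_mono[OF finV VS] by simp_all
  consider "v \<notin> V" | "v \<in> VS" | "v \<in> V - VS"
    using VS by blast
  then show ?thesis
  proof cases
    case 1
    then have "{e \<in> ET. v \<in> e} = {}"
      using simple_graph_edge_subset[OF sg] by blast
    then show ?thesis
      unfolding degree_def by (metis card.empty le0)
  next
    case 2
    then show ?thesis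
      using extends_seed_degree_le_seed[OF sg ext] deg[rule_format, of v] cardVS by fastforce
  next
    case 3
    then show ?thesis
      using extends_seed_degree_le_outside[OF sg ext VS] cardVS by fastforce
  qed
qed

lemma spanning_tree_k_proper:
  assumes tree: "leaf_tree V ET" and sub: "ET \<subseteq> E" and proper: "proper_edges c ET"
  shows "k_proper_coloring k V E c"
  unfolding k_proper_coloring_def proper_S_tree_exists_def
proof (intro allI impI)
  fix S
  assume "S \<subseteq> V \<and> card S = k"
  moreover have "subgraph V ET V E"
    unfolding subgraph_def using sub leaf_tree_edge_subset[OF tree] by blast
  ultimately show "\<exists>VT ET'. subgraph VT ET' V E \<and> is_tree VT ET' \<and> S \<subseteq> VT \<and> proper_edges c ET'"
    using leaf_tree_is_tree[OF tree] proper by blast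
qed

lemma k_proper_coloring_from_seed:
  assumes sg: "simple_graph V E" and cg: "connected_graph V E"
    and seed: "leaf_tree VS ES" "VS \<subseteq> V" "ES \<subseteq> E" and deg: "\<forall>v. degree ES v \<le> d"
    and small: "card VS < card V + d"
  shows "\<exists>c. k_proper_coloring k V E c \<and> card (c ` E) \<le> card V + d - card VS"
proof -
  obtain ET where ET: "leaf_tree V ET" "ET \<subseteq> E" "extends_seed VS ES ET"
    using leaf_tree_extend_spanning[OF sg cg seed(1) order_refl seed(2,3) extends_seed_refl[OF seed(1)]]
    by blast
  define D where "D = card V + d - card VS"
  have "\<forall>v. degree ET v \<le> D"
    using extends_seed_degree_le[OF leaf_tree_simple_graph[OF ET(1)] ET(3) seed(2) deg]
    unfolding D_def by blast
  then obtain c :: "'a set \<Rightarrow> nat" where c: "proper_edges c ET" "c ` ET \<subseteq> {..<D}"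
    using leaf_tree_proper_colouring[OF ET(1)] by blast
  define c' where "c' e = (if e \<in> ET then c e else 0)" for e
  have "proper_edges c' ET"
    using c(1) unfolding proper_edges_def c'_def by simp
  then have "k_proper_coloring k V E c'"
    by (rule spanning_tree_k_proper[OF ET(1,2)])
  moreover have "0 < D"
    using small unfolding D_def by simp
  then have "c' ` E \<subseteq> {..<D}"
    using c(2) unfolding c'_def by auto
  then have "card (c' ` E) \<le> D"
    using card_mono[of "{..<D}" "c' ` E"] by simp
  ultimately show ?thesis
    unfolding D_def by blast
qed

lemma k_proper_coloring_exists:
  assumes sg: "simple_graph V E" and cg: "connected_graph V E"
  shows "\<exists>c. k_proper_coloring k V E c"
proof -
  obtain v where v: "v \<in> V"
    using cg unfolding connected_graph_def by blast
  have "finite V"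
    using sg unfolding simple_graph_def by blast
  with v have "card {v} < card V + 1"
    by (auto simp: card_gt_0_iff)
  moreover have "\<forall>u. degree {} u \<le> 1"
    by (simp add: degree_def)
  ultimately show ?thesis
    using k_proper_coloring_from_seed[OF sg cg leaf_tree.single] v by blast
qed

lemma px_le:
  assumes "k_proper_coloring k V E c"
  shows "px k V E \<le> card (c ` E)"
  unfolding px_def using assms by (blast intro: Least_le)

lemma px_ge:
  assumes "simple_graph V E" and "connected_graph V E"
    and "\<And>c. k_proper_coloring k V E c \<Longrightarrow> b \<le> card (c ` E)"
  shows "b \<le> px k V E"
proof -
  let ?P = "\<lambda>m. \<exists>c. k_proper_coloring k V E c \<and> card (c ` E) = m"
  have "\<exists>m. ?P m"
    using k_proper_coloring_exists[OF assms(1,2)] by blast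
  then have "\<exists>c. k_proper_coloring k V E c \<and> card (c ` E) = px k V E"
    unfolding px_def by (rule LeastI_ex[where P = ?P])
  then obtain c where "k_proper_coloring k V E c" "card (c ` E) = px k V E"
    by blast
  with assms(3) show ?thesis
    by metis
qed

lemma px_le_from_seed:
  assumes "simple_graph V E" and "connected_graph V E"
    and "leaf_tree VS ES" "VS \<subseteq> V" "ES \<subseteq> E" and "\<forall>v. degree ES v \<le> d"
    and "card VS < card V + d"
  shows "px k V E \<le> card V + d - card VS"
  using k_proper_coloring_from_seed[OF assms] px_le order_trans by blast

lemma px_le_path4:
  assumes sg: "simple_graph V E" and cg: "connected_graph V E"
    and V: "{a, b, c, d} \<subseteq> V" and dist: "distinct [a, b, c, d]"
    and E: "{a, b} \<in> E" "{b, c} \<in> E" "{c, d} \<in> E"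
  shows "px k V E \<le> card V - 2"
proof -
  let ?VS = "{d, c, b, a}" and ?ES = "{{c, d}, {b, c}, {a, b}}"
  have "leaf_tree ?VS ?ES"
    using dist by (intro leaf_tree.intros) auto
  moreover have "?VS \<subseteq> V" "?ES \<subseteq> E"
    using V E by auto
  moreover have "\<forall>v. degree ?ES v \<le> 2"
  proof
    fix v
    have "length (filter (\<lambda>e. v \<in> e) [{c, d}, {b, c}, {a, b}]) \<le> 2"
      using dist by (auto simp: if_distrib[where f = length])
    then show "degree ?ES v \<le> 2"
      using degree_set_le_length_filter[of "[{c, d}, {b, c}, {a, b}]" v] by simp
  qed
  moreover have "card ?VS = 4"
    using distinct_card[of "[d, c, b, a]"] dist by auto
  moreover have "card ?VS \<le> card V"
    using \<open>?VS \<subseteq> V\<close> sg card_mono unfolding simple_graph_def by blast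
  ultimately show ?thesis
    using px_le_from_seed[OF sg cg, of ?VS ?ES 2 k] by simp
qed

lemma px_le_path5:
  assumes sg: "simple_graph V E" and cg: "connected_graph V E"
    and V: "{a, b, c, d, e} \<subseteq> V" and dist: "distinct [a, b, c, d, e]"
    and E: "{a, b} \<in> E" "{b, c} \<in> E" "{c, d} \<in> E" "{d, e} \<in> E"
  shows "px k V E \<le> card V - 3"
proof -
  let ?VS = "{e, d, c, b, a}" and ?ES = "{{d, e}, {c, d}, {b, c}, {a, b}}"
  have "leaf_tree ?VS ?ES"
    using dist by (intro leaf_tree.intros) auto
  moreover have "?VS \<subseteq> V" "?ES \<subseteq> E"
    using V E by auto
  moreover have "\<forall>v. degree ?ES v \<le> 2"
  proof
    fix v
    have "length (filter (\<lambda>e. v \<in> e) [{d, e}, {c, d}, {b, c}, {a, b}]) \<le> 2"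
      using dist by (auto simp: if_distrib[where f = length])
    then show "degree ?ES v \<le> 2"
      using degree_set_le_length_filter[of "[{d, e}, {c, d}, {b, c}, {a, b}]" v] by simp
  qed
  moreover have "card ?VS = 5"
    using distinct_card[of "[e, d, c, b, a]"] dist by auto
  moreover have "card ?VS \<le> card V"
    using \<open>?VS \<subseteq> V\<close> sg card_mono unfolding simple_graph_def by blast
  ultimately show ?thesis
    using px_le_from_seed[OF sg cg, of ?VS ?ES 2 k] by simp
qed

lemma px_le_double_star:
  assumes sg: "simple_graph V E" and cg: "connected_graph V E"
    and V: "{x, y, l1, l2, m1, m2} \<subseteq> V" and dist: "distinct [x, y, l1, l2, m1, m2]"
    and E: "{x, y} \<in> E" "{x, l1} \<in> E" "{x, l2} \<in> E" "{y, m1} \<in> E" "{y, m2} \<in> E"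
  shows "px k V E \<le> card V - 3"
proof -
  let ?VS = "{m2, m1, l2, l1, y, x}" and ?ES = "{{y, m2}, {y, m1}, {x, l2}, {x, l1}, {x, y}}"
  have "leaf_tree ?VS ?ES"
    using dist by (intro leaf_tree.intros) auto
  moreover have "?VS \<subseteq> V" "?ES \<subseteq> E"
    using V E by auto
  moreover have "\<forall>v. degree ?ES v \<le> 3"
  proof
    fix v
    have "length (filter (\<lambda>e. v \<in> e) [{y, m2}, {y, m1}, {x, l2}, {x, l1}, {x, y}]) \<le> 3"
      using dist by (auto simp: if_distrib[where f = length])
    then show "degree ?ES v \<le> 3"
      using degree_set_le_length_filter[of "[{y, m2}, {y, m1}, {x, l2}, {x, l1}, {x, y}]" v] by simp
  qed
  moreover have "card ?VS = 6"
    using distinct_card[of "[m2, m1, l2, l1, y, x]"] dist by auto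
  moreover have "card ?VS \<le> card V"
    using \<open>?VS \<subseteq> V\<close> sg card_mono unfolding simple_graph_def by blast
  ultimately show ?thesis
    using px_le_from_seed[OF sg cg, of ?VS ?ES 3 k] by simp
qed

section \<open>Lower bounds from bridges\<close>

lemma k_proper_coloring_subtree:
  assumes kp: "k_proper_coloring k V E c" and fin: "finite V"
    and T: "T \<subseteq> V" "card T \<le> k" and kV: "k \<le> card V"
  obtains VT ET where "subgraph VT ET V E" "is_tree VT ET" "T \<subseteq> VT" "proper_edges c ET"
proof -
  have "card (V - T) = card V - card T"
    using T fin by (simp add: card_Diff_subset finite_subset)
  then have "k - card T \<le> card (V - T)"
    using kV by linarith
  then obtain U where U: "U \<subseteq> V - T" "card U = k - card T" "finite U"
    by (rule obtain_subset_with_card_n)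
  have "card (T \<union> U) = card T + card U"
    using U fin T by (intro card_Un_disjoint) (auto intro: finite_subset)
  then have "T \<union> U \<subseteq> V \<and> card (T \<union> U) = k"
    using U T by auto
  then have "proper_S_tree_exists V E c (T \<union> U)"
    using kp unfolding k_proper_coloring_def by blast
  then show ?thesis
    using that unfolding proper_S_tree_exists_def by blast
qed

lemma subtree_meets_cut:
  assumes tree: "is_tree VT ET" and sub: "subgraph VT ET V E"
    and xy: "x \<in> VT" "y \<in> VT" "x \<in> A" "y \<notin> A"
    and cut: "\<And>a b. {a, b} \<in> E \<Longrightarrow> a \<in> A \<Longrightarrow> b \<notin> A \<Longrightarrow> {a, b} \<in> F"
  shows "\<exists>e \<in> F. e \<in> ET"
proof -
  have "connected_graph VT ET"
    using tree unfolding is_tree_def by blast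
  then obtain a b where ab: "{a, b} \<in> ET" "a \<in> A" "b \<notin> A"
    by (rule connected_graph_edge_leaving[OF _ xy(1,3,2,4)])
  moreover have "{a, b} \<in> E"
    using sub ab(1) unfolding subgraph_def by blast
  ultimately show ?thesis
    using cut by blast
qed

lemma subtree_contains_bridge:
  assumes "is_tree VT ET" and "subgraph VT ET V E"
    and "x \<in> VT" "y \<in> VT" "x \<in> A" "y \<notin> A"
    and "\<And>a b. {a, b} \<in> E \<Longrightarrow> a \<in> A \<Longrightarrow> b \<notin> A \<Longrightarrow> {a, b} = e"
  shows "e \<in> ET"
  using subtree_meets_cut[OF assms(1-6), of "{e}"] assms(7) by blast

lemma proper_edges_common_vertex:
  "proper_edges c ET \<Longrightarrow> e \<in> ET \<Longrightarrow> f \<in> ET \<Longrightarrow> e \<noteq> f \<Longrightarrow> x \<in> e \<Longrightarrow> x \<in> f \<Longrightarrow> c e \<noteq> c f"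
  unfolding proper_edges_def by blast

text \<open>A tree through r i and r j has to leave both A i and A j, so it contains the two edges
  at x, which therefore get different colours.\<close>

lemma inj_on_bridge_colours:
  assumes kp: "k_proper_coloring k V E c" and fin: "finite V" and k: "2 \<le> k" "k \<le> card V"
    and inj: "inj_on y I"
    and side: "\<And>i. i \<in> I \<Longrightarrow> r i \<in> A i \<and> A i \<subseteq> V"
    and bridge: "\<And>i a b. i \<in> I \<Longrightarrow> {a, b} \<in> E \<Longrightarrow> a \<in> A i \<Longrightarrow> b \<notin> A i \<Longrightarrow> {a, b} = {x, y i}"
    and apart: "\<And>i j. i \<in> I \<Longrightarrow> j \<in> I \<Longrightarrow> i \<noteq> j \<Longrightarrow> r j \<notin> A i"
  shows "inj_on (\<lambda>i. c {x, y i}) I"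
proof (rule inj_onI, rule ccontr)
  fix i j
  assume ij: "i \<in> I" "j \<in> I" "c {x, y i} = c {x, y j}" "i \<noteq> j"
  have "card {r i, r j} \<le> k"
    using k by (simp add: card_insert_if)
  moreover have "{r i, r j} \<subseteq> V"
    using side ij(1,2) by blast
  ultimately obtain VT ET where T: "subgraph VT ET V E" "is_tree VT ET" "{r i, r j} \<subseteq> VT"
    "proper_edges c ET"
    using k_proper_coloring_subtree[OF kp fin _ _ k(2)] by blast
  have r: "r i \<in> VT" "r j \<in> VT"
    using T(3) by auto
  have "{x, y i} \<in> ET"
    using side[OF ij(1)] apart[OF ij(1,2,4)] bridge[OF ij(1)]
    by (intro subtree_contains_bridge[OF T(2,1) r, where A = "A i"]) auto
  moreover have "{x, y j} \<in> ET"
    using side[OF ij(2)] apart[OF ij(2,1)] bridge[OF ij(2)] ij(4)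
    by (intro subtree_contains_bridge[OF T(2,1) r(2,1), where A = "A j"]) auto
  moreover have "{x, y i} \<noteq> {x, y j}"
    using inj ij by (auto simp: doubleton_eq_iff inj_on_eq_iff)
  ultimately show False
    using proper_edges_common_vertex[OF T(4)] ij(3) by blast
qed

lemma card_colours_ge_inj:
  assumes "finite E" and "\<And>i. i \<in> I \<Longrightarrow> f i \<in> E" and "inj_on (\<lambda>i. c (f i)) I"
  shows "card I \<le> card (c ` E)"
proof -
  have "card I = card ((\<lambda>i. c (f i)) ` I)"
    using assms(3) by (simp add: card_image)
  also have "\<dots> \<le> card (c ` E)"
    using assms(1,2) by (intro card_mono) auto
  finally show ?thesis .
qed

lemma px_ge_star:
  assumes sg: "simple_graph V E" and cg: "connected_graph V E" and k: "2 \<le> k" "k \<le> card V"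
    and c0: "c0 \<in> V" and centre: "\<forall>e \<in> E. c0 \<in> e" and spanning: "\<forall>v \<in> V - {c0}. {c0, v} \<in> E"
  shows "card V - 1 \<le> px k V E"
proof (rule px_ge[OF sg cg])
  fix c
  assume kp: "k_proper_coloring k V E c"
  have finV: "finite V"
    using sg unfolding simple_graph_def by blast
  have side: "v \<in> {v} \<and> {v} \<subseteq> V" if "v \<in> V - {c0}" for v
    using that by blast
  have bridge: "{a, b} = {c0, v}" if "v \<in> V - {c0}" "{a, b} \<in> E" "a \<in> {v}" "b \<notin> {v}" for v a b
  proof -
    have "c0 \<in> {a, b}"
      using centre that(2) by (rule bspec)
    moreover have "a = v" "b \<noteq> v" "v \<noteq> c0"
      using that(1,3,4) by auto
    ultimately show ?thesis
      by (metis insert_commute insertE singletonD)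
  qed
  have apart: "w \<notin> {v}" if "v \<noteq> w" for v w
    using that by blast
  have inj: "inj_on (\<lambda>v. c {c0, v}) (V - {c0})"
    using inj_on_bridge_colours[where x = c0 and y = "\<lambda>v. v" and A = "\<lambda>v. {v}" and r = "\<lambda>v. v"
      and I = "V - {c0}", OF kp finV k inj_on_id2] side bridge apart by blast
  have edges: "{c0, v} \<in> E" if "v \<in> V - {c0}" for v
    using spanning that by (rule bspec)
  have "card (V - {c0}) \<le> card (c ` E)"
    using card_colours_ge_inj[OF simple_graph_finite_edges[OF sg] edges inj] .
  then show "card V - 1 \<le> card (c ` E)"
    using c0 finV by simp
qed

section \<open>The index of the two extremal graphs\<close>

locale labelled_graph =
  fixes V :: "'a set" and E :: "'a set set" and n :: nat and g :: "nat \<Rightarrow> 'a" and L :: "nat set set"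
  assumes simple: "simple_graph V E" and bij: "bij_betw g {0..<n} V"
    and edge_iff: "\<And>i j. i < n \<Longrightarrow> j < n \<Longrightarrow> {g i, g j} \<in> E \<longleftrightarrow> {i, j} \<in> L"
begin

lemma finite_V: "finite V"
  using simple unfolding simple_graph_def by blast

lemma card_V: "card V = n"
  using bij_betw_same_card[OF bij] by simp

lemma label_in_V: "i < n \<Longrightarrow> g i \<in> V"
  using bij_betw_apply[OF bij] by simp

lemma label_eq_iff: "i < n \<Longrightarrow> j < n \<Longrightarrow> g i = g j \<longleftrightarrow> i = j"
  using bij_betw_imp_inj_on[OF bij] by (simp add: inj_on_eq_iff)

lemma edge_from_label:
  assumes "{g i, b} \<in> E" and "i < n"
  obtains j where "j < n" "b = g j" "{i, j} \<in> L"
proof -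
  have "b \<in> V"
    using simple_graph_edgeD[OF simple assms(1)] by simp
  then obtain j where "j < n" "b = g j"
    using bij_betw_imp_surj_on[OF bij] by (metis atLeastLessThan_iff imageE)
  with assms show ?thesis
    using edge_iff that by blast
qed

end

lemma graph_iso_labelled_graph:
  assumes "simple_graph V E" and "graph_iso V E {0..<n} L"
  obtains g where "labelled_graph V E n g L"
proof -
  obtain f where f: "bij_betw f V {0..<n}"
    and iso: "\<forall>u \<in> V. \<forall>v \<in> V. {u, v} \<in> E \<longleftrightarrow> {f u, f v} \<in> L"
    using assms(2) unfolding graph_iso_def by blast
  define g where "g = inv_into V f"
  have g: "bij_betw g {0..<n} V"
    unfolding g_def by (rule bij_betw_inv_into[OF f])
  have "f (g i) = i" if "i < n" for i
    using that bij_betw_inv_into_right[OF f] unfolding g_def by simp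
  then have "{g i, g j} \<in> E \<longleftrightarrow> {i, j} \<in> L" if "i < n" "j < n" for i j
    using iso bij_betw_apply[OF g] that by force
  with assms(1) g show ?thesis
    using that unfolding labelled_graph_def by blast
qed

lemma Splus_edge_iff:
  "{i, j} \<in> Splus_edges n \<longleftrightarrow> (i = 0 \<and> 1 \<le> j \<and> j < n) \<or> (j = 0 \<and> 1 \<le> i \<and> i < n) \<or> {i, j} = {1, 2}"
  unfolding Splus_edges_def by (auto simp: doubleton_eq_iff)

lemma G0_edge_iff:
  "{i, j} \<in> G0_edges n \<longleftrightarrow>
    (i = 0 \<and> 1 \<le> j \<and> j < n - 1) \<or> (j = 0 \<and> 1 \<le> i \<and> i < n - 1) \<or> {i, j} = {n - 2, n - 1}"
  unfolding G0_edges_def by (auto simp: doubleton_eq_iff)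

locale Splus_labelling = labelled_graph V E n g "Splus_edges n" for V E n g +
  assumes n5: "5 \<le> n"
begin

lemma edge_label_iff:
  "i < n \<Longrightarrow> j < n \<Longrightarrow> {g i, g j} \<in> E \<longleftrightarrow> (i = 0 \<and> 1 \<le> j) \<or> (j = 0 \<and> 1 \<le> i) \<or> {i, j} = {1, 2}"
  using edge_iff Splus_edge_iff by auto

lemma pendant_bridge:
  assumes i: "3 \<le> i" "i < n" and ab: "{a, b} \<in> E" "a \<in> {g i}" "b \<notin> {g i}"
  shows "{a, b} = {g 0, g i}"
proof -
  obtain j where j: "j < n" "b = g j" "{i, j} \<in> Splus_edges n"
    using ab i edge_from_label[of i b] by auto
  then have "j = 0"
    using i Splus_edge_iff[of i j n] by (auto simp: doubleton_eq_iff)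
  with ab j show ?thesis
    by (auto simp: insert_commute)
qed

lemma pendant_colours_inj:
  assumes kp: "k_proper_coloring k V E c" and k: "2 \<le> k" "k \<le> n"
  shows "inj_on (\<lambda>i. c {g 0, g i}) {3..<n}"
proof (rule inj_on_bridge_colours[OF kp finite_V, where A = "\<lambda>i. {g i}" and r = g])
  show "2 \<le> k" "k \<le> card V"
    using k card_V by simp_all
  show "inj_on g {3..<n}"
    using bij_betw_imp_inj_on[OF bij] by (rule inj_on_subset) auto
qed (use label_in_V pendant_bridge label_eq_iff in auto)

lemma triangle_cut:
  assumes pq: "{p, q} \<in> E" "p \<in> {g 1, g 2}" "q \<notin> {g 1, g 2}"
  shows "{p, q} \<in> {{g 0, g 1}, {g 0, g 2}}"
proof -
  obtain i where i: "i \<in> {1, 2}" "p = g i"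
    using pq(2) by blast
  have "{g i, q} \<in> E" "i < n"
    using pq i n5 by auto
  then obtain j where j: "j < n" "q = g j" "{i, j} \<in> Splus_edges n"
    by (rule edge_from_label)
  moreover have "j \<noteq> 1" "j \<noteq> 2"
    using pq(3) j(2) by auto
  ultimately have "j = 0"
    using i(1) Splus_edge_iff[of i j n] by (auto simp: doubleton_eq_iff)
  with i j(2) show ?thesis
    by (auto simp: insert_commute)
qed

text \<open>If all colours occurred on pendant edges, the edges from 0 to 1 and to 2 would repeat the
  colours of pendant edges to some a and b; but a tree through 1, a and b contains both of these
  pendant edges and one of the two edges from 0 to 1 and 2.\<close>

lemma extra_colour:
  assumes kp: "k_proper_coloring k V E c" and k: "3 \<le> k" "k \<le> n"
  shows "\<exists>e \<in> E. c e \<notin> (\<lambda>i. c {g 0, g i}) ` {3..<n}"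
proof (rule ccontr)
  assume "\<not> ?thesis"
  moreover have "{g 0, g 1} \<in> E" "{g 0, g 2} \<in> E"
    using edge_label_iff n5 by auto
  ultimately obtain a b where a: "a \<in> {3..<n}" "c {g 0, g 1} = c {g 0, g a}"
    and b: "b \<in> {3..<n}" "c {g 0, g 2} = c {g 0, g b}"
    by blast
  have "card {g 1, g a, g b} \<le> k"
    using k card_length[of "[g 1, g a, g b]"] by simp
  moreover have "{g 1, g a, g b} \<subseteq> V"
    using label_in_V a b n5 by auto
  ultimately obtain VT ET where T: "subgraph VT ET V E" "is_tree VT ET" "{g 1, g a, g b} \<subseteq> VT"
    "proper_edges c ET"
    using k_proper_coloring_subtree[OF kp finite_V] k card_V by blast
  have ne: "g 1 \<noteq> g a" "g 1 \<noteq> g b" "g 2 \<noteq> g b" "g 0 \<noteq> g 1" "g 0 \<noteq> g 2" "g 1 \<noteq> g 2"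
    "g a \<noteq> g 2"
    using label_eq_iff a b n5 by auto
  have "{g 0, g a} \<in> ET"
    using T(3) ne a pendant_bridge[of a]
    by (intro subtree_contains_bridge[OF T(2,1), where x = "g a" and y = "g 1" and A = "{g a}"]) auto
  moreover have "{g 0, g b} \<in> ET"
    using T(3) ne b pendant_bridge[of b]
    by (intro subtree_contains_bridge[OF T(2,1), where x = "g b" and y = "g 1" and A = "{g b}"]) auto
  moreover have "\<exists>e \<in> {{g 0, g 1}, {g 0, g 2}}. e \<in> ET"
    using T(3) ne triangle_cut
    by (intro subtree_meets_cut[OF T(2,1), where x = "g 1" and y = "g a" and A = "{g 1, g 2}"]) auto
  moreover have "{g 0, g 1} \<noteq> {g 0, g a}" "{g 0, g 2} \<noteq> {g 0, g b}"
    using ne by (auto simp: doubleton_eq_iff)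
  ultimately show False
    using proper_edges_common_vertex[OF T(4), of _ _ "g 0"] a(2) b(2) by auto
qed

lemma px_eq:
  assumes cg: "connected_graph V E" and k: "3 \<le> k" "k \<le> n"
  shows "px k V E = n - 2"
proof (rule antisym)
  show "px k V E \<le> n - 2"
    using px_le_path4[OF simple cg, of "g 1" "g 2" "g 0" "g 3"] label_in_V label_eq_iff edge_label_iff
      n5 card_V by auto
  show "n - 2 \<le> px k V E"
  proof (rule px_ge[OF simple cg])
    fix c
    assume kp: "k_proper_coloring k V E c"
    let ?P = "(\<lambda>i. c {g 0, g i}) ` {3..<n}"
    obtain e where e: "e \<in> E" "c e \<notin> ?P"
      using extra_colour[OF kp k] by blast
    have "card ?P = n - 3"
      using pendant_colours_inj[OF kp] k by (simp add: card_image)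
    moreover have "insert (c e) ?P \<subseteq> c ` E"
      using e edge_label_iff by auto
    then have "card (insert (c e) ?P) \<le> card (c ` E)"
      using simple_graph_finite_edges[OF simple] by (intro card_mono) auto
    ultimately show "n - 2 \<le> card (c ` E)"
      using e(2) n5 by simp
  qed
qed

end

text \<open>Deleting the edge from the centre 0 to i cuts off this set of labels.\<close>

definition G0_branch :: "nat \<Rightarrow> nat \<Rightarrow> nat set" where
  "G0_branch n i = (if i = n - 2 then {n - 2, n - 1} else {i})"

locale G0_labelling = labelled_graph V E n g "G0_edges n" for V E n g +
  assumes n5: "5 \<le> n"
begin

lemma branch_bridge:
  assumes i: "1 \<le> i" "i < n - 1" and pq: "{p, q} \<in> E" "p \<in> g ` G0_branch n i" "q \<notin> g ` G0_branch n i"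
  shows "{p, q} = {g 0, g i}"
proof -
  obtain l where l: "l \<in> G0_branch n i" "p = g l"
    using pq(2) by blast
  have "l < n"
    using l(1) i n5 unfolding G0_branch_def by (auto split: if_splits)
  with pq(1) l(2) have "{g l, q} \<in> E" "l < n"
    by simp_all
  then obtain j where j: "j < n" "q = g j" "{l, j} \<in> G0_edges n"
    by (rule edge_from_label)
  have "j \<notin> G0_branch n i"
    using pq(3) j(2) by blast
  with l(1) j(3) i n5 have "j = 0" "l = i"
    unfolding G0_branch_def G0_edge_iff by (auto simp: doubleton_eq_iff split: if_splits)
  with l(2) j(2) show ?thesis
    by (simp add: insert_commute)
qed

lemma centre_edge:
  assumes "i \<in> {1..<n - 1}"
  shows "{g 0, g i} \<in> E"
proof -
  have "{0, i} \<in> G0_edges n"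
    using assms unfolding G0_edge_iff by simp
  moreover have "i < n"
    using assms by auto
  ultimately show ?thesis
    using edge_iff[of 0 i] n5 by simp
qed

lemma centre_colours_inj:
  assumes kp: "k_proper_coloring k V E c" and k: "2 \<le> k" "k \<le> n"
  shows "inj_on (\<lambda>i. c {g 0, g i}) {1..<n - 1}"
proof (rule inj_on_bridge_colours[OF kp finite_V, where A = "\<lambda>i. g ` G0_branch n i"
    and r = "\<lambda>i. if i = n - 2 then g (n - 1) else g i"])
  show "2 \<le> k" "k \<le> card V"
    using k card_V by simp_all
  show "inj_on g {1..<n - 1}"
    using bij_betw_imp_inj_on[OF bij] by (rule inj_on_subset) auto
  show "(if i = n - 2 then g (n - 1) else g i) \<in> g ` G0_branch n i \<and> g ` G0_branch n i \<subseteq> V"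
    if "i \<in> {1..<n - 1}" for i
    using that label_in_V unfolding G0_branch_def by auto
  show "{a, b} = {g 0, g i}"
    if "i \<in> {1..<n - 1}" "{a, b} \<in> E" "a \<in> g ` G0_branch n i" "b \<notin> g ` G0_branch n i" for i a b
    using that branch_bridge by simp
  show "(if j = n - 2 then g (n - 1) else g j) \<notin> g ` G0_branch n i"
    if "i \<in> {1..<n - 1}" "j \<in> {1..<n - 1}" "i \<noteq> j" for i j
    using that label_eq_iff unfolding G0_branch_def by auto
qed

lemma px_eq:
  assumes cg: "connected_graph V E" and k: "3 \<le> k" "k \<le> n"
  shows "px k V E = n - 2"
proof (rule antisym)
  have "{g 1, g 0} \<in> E" "{g 0, g (n - 2)} \<in> E" "{g (n - 2), g (n - 1)} \<in> E"
    using edge_iff G0_edge_iff n5 by (auto simp: insert_commute)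
  moreover have "{g 1, g 0, g (n - 2), g (n - 1)} \<subseteq> V"
    using label_in_V n5 by auto
  moreover have "distinct [g 1, g 0, g (n - 2), g (n - 1)]"
    using label_eq_iff n5 by auto
  ultimately show "px k V E \<le> n - 2"
    using px_le_path4[OF simple cg] card_V by metis
  show "n - 2 \<le> px k V E"
  proof (rule px_ge[OF simple cg])
    fix c
    assume "k_proper_coloring k V E c"
    from card_colours_ge_inj[OF simple_graph_finite_edges[OF simple] centre_edge
        centre_colours_inj[OF this]] k
    show "n - 2 \<le> card (c ` E)"
      by simp
  qed
qed

end

lemma px_eq_if_graph_iso_Splus:
  assumes sg: "simple_graph V E" and cg: "connected_graph V E"
    and iso: "graph_iso V E {0..<n} (Splus_edges n)" and n: "5 \<le> n" and k: "3 \<le> k" "k \<le> n"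
  shows "px k V E = n - 2"
proof -
  obtain g where "labelled_graph V E n g (Splus_edges n)"
    using graph_iso_labelled_graph[OF sg iso] by blast
  then interpret Splus_labelling V E n g
    using n by (intro Splus_labelling.intro Splus_labelling_axioms.intro)
  show ?thesis
    using px_eq[OF cg k] .
qed

lemma px_eq_if_graph_iso_G0:
  assumes sg: "simple_graph V E" and cg: "connected_graph V E"
    and iso: "graph_iso V E {0..<n} (G0_edges n)" and n: "5 \<le> n" and k: "3 \<le> k" "k \<le> n"
  shows "px k V E = n - 2"
proof -
  obtain g where "labelled_graph V E n g (G0_edges n)"
    using graph_iso_labelled_graph[OF sg iso] by blast
  then interpret G0_labelling V E n g
    using n by (intro G0_labelling.intro G0_labelling_axioms.intro)
  show ?thesis
    using px_eq[OF cg k] .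
qed

lemma bij_betw_extend_labelling:
  assumes fin: "finite V" and S: "S \<subseteq> V" and inj: "inj_on f S" and f: "f ` S \<subseteq> {0..<card V}"
  obtains h where "bij_betw h V {0..<card V}" "\<And>v. v \<in> S \<Longrightarrow> h v = f v"
proof -
  have "card (V - S) = card ({0..<card V} - f ` S)"
    using fin S f card_image[OF inj] by (simp add: card_Diff_subset finite_subset)
  then obtain h' where h': "bij_betw h' (V - S) ({0..<card V} - f ` S)"
    using fin finite_same_card_bij by blast
  define h where "h v = (if v \<in> S then f v else h' v)" for v
  have "bij_betw h S (f ` S)"
    using inj_on_imp_bij_betw[OF inj] by (rule bij_betw_cong[THEN iffD1, rotated]) (simp add: h_def)
  moreover have "bij_betw h (V - S) ({0..<card V} - f ` S)"
    using h' by (rule bij_betw_cong[THEN iffD1, rotated]) (simp add: h_def)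
  ultimately have "bij_betw h (S \<union> (V - S)) (f ` S \<union> ({0..<card V} - f ` S))"
    by (rule bij_betw_combine) blast
  moreover have "S \<union> (V - S) = V" "f ` S \<union> ({0..<card V} - f ` S) = {0..<card V}"
    using S f by auto
  ultimately show ?thesis
    using that h_def by auto
qed

lemma graph_iso_Splus:
  assumes fin: "finite V" and n: "card V = n" and V: "c0 \<in> V" "x \<in> V" "y \<in> V"
    and dist: "distinct [c0, x, y]"
    and edges: "\<And>u v. u \<in> V \<Longrightarrow> v \<in> V \<Longrightarrow>
      {u, v} \<in> E \<longleftrightarrow> (u = c0 \<and> v \<noteq> c0) \<or> (v = c0 \<and> u \<noteq> c0) \<or> {u, v} = {x, y}"
  shows "graph_iso V E {0..<n} (Splus_edges n)"
proof -
  have "3 \<le> n"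
    using card_mono[OF fin, of "{c0, x, y}"] V dist n by simp
  define f where "f v = (if v = c0 then 0 else if v = x then 1 else 2 :: nat)" for v
  have "inj_on f {c0, x, y}" "f ` {c0, x, y} \<subseteq> {0..<card V}"
    using dist \<open>3 \<le> n\<close> n unfolding f_def by (auto simp: inj_on_def)
  then obtain h where h: "bij_betw h V {0..<n}" "\<And>v. v \<in> {c0, x, y} \<Longrightarrow> h v = f v"
    using bij_betw_extend_labelling[OF fin] V n by (metis empty_subsetI insert_subset)
  have hv: "h c0 = 0" "h x = 1" "h y = 2"
    using h(2) dist unfolding f_def by auto
  have inj: "inj_on h V"
    by (rule bij_betw_imp_inj_on[OF h(1)])
  have label: "h u = 0 \<longleftrightarrow> u = c0" "h u = 1 \<longleftrightarrow> u = x" "h u = 2 \<longleftrightarrow> u = y" "h u < n" if "u \<in> V" for u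
    using inj_on_eq_iff[OF inj that V(1)] inj_on_eq_iff[OF inj that V(2)] inj_on_eq_iff[OF inj that V(3)]
      hv bij_betw_apply[OF h(1) that] by auto
  have "{u, v} \<in> E \<longleftrightarrow> {h u, h v} \<in> Splus_edges n" if "u \<in> V" "v \<in> V" for u v
    unfolding edges[OF that] Splus_edge_iff using label[OF that(1)] label[OF that(2)] dist
    by (auto simp: doubleton_eq_iff)
  with h(1) show ?thesis
    unfolding graph_iso_def by blast
qed

lemma graph_iso_G0:
  assumes fin: "finite V" and n: "card V = n" and V: "c0 \<in> V" "y \<in> V" "r \<in> V"
    and dist: "distinct [c0, y, r]"
    and edges: "\<And>u v. u \<in> V \<Longrightarrow> v \<in> V \<Longrightarrow>
      {u, v} \<in> E \<longleftrightarrow> (u = c0 \<and> v \<notin> {c0, r}) \<or> (v = c0 \<and> u \<notin> {c0, r}) \<or> {u, v} = {y, r}"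
  shows "graph_iso V E {0..<n} (G0_edges n)"
proof -
  have "3 \<le> n"
    using card_mono[OF fin, of "{c0, y, r}"] V dist n by simp
  define f where "f v = (if v = c0 then 0 else if v = y then n - 2 else n - 1)" for v
  have "inj_on f {c0, y, r}" "f ` {c0, y, r} \<subseteq> {0..<card V}"
    using dist \<open>3 \<le> n\<close> n unfolding f_def by (auto simp: inj_on_def)
  then obtain h where h: "bij_betw h V {0..<n}" "\<And>v. v \<in> {c0, y, r} \<Longrightarrow> h v = f v"
    using bij_betw_extend_labelling[OF fin] V n by (metis empty_subsetI insert_subset)
  have hv: "h c0 = 0" "h y = n - 2" "h r = n - 1"
    using h(2) dist unfolding f_def by auto
  have inj: "inj_on h V"
    by (rule bij_betw_imp_inj_on[OF h(1)])
  have label: "h u = 0 \<longleftrightarrow> u = c0" "h u = n - 2 \<longleftrightarrow> u = y" "h u = n - 1 \<longleftrightarrow> u = r" "h u < n"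
    if "u \<in> V" for u
    using inj_on_eq_iff[OF inj that V(1)] inj_on_eq_iff[OF inj that V(2)] inj_on_eq_iff[OF inj that V(3)]
      hv bij_betw_apply[OF h(1) that] by auto
  have "{u, v} \<in> E \<longleftrightarrow> {h u, h v} \<in> G0_edges n" if "u \<in> V" "v \<in> V" for u v
    unfolding edges[OF that] G0_edge_iff using label[OF that(1)] label[OF that(2)] dist \<open>3 \<le> n\<close>
    by (auto simp: doubleton_eq_iff)
  with h(1) show ?thesis
    unfolding graph_iso_def by blast
qed

section \<open>Graphs without a path on five vertices or a double star\<close>

locale P5_double_star_free =
  fixes V :: "'a set" and E :: "'a set set"
  assumes simple: "simple_graph V E" and connected: "connected_graph V E" and five: "5 \<le> card V"
    and no_P5: "\<And>a b c d e. distinct [a, b, c, d, e] \<Longrightarrow>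
      {a, b} \<in> E \<Longrightarrow> {b, c} \<in> E \<Longrightarrow> {c, d} \<in> E \<Longrightarrow> {d, e} \<in> E \<Longrightarrow> False"
    and no_double_star: "\<And>x y l1 l2 m1 m2. distinct [x, y, l1, l2, m1, m2] \<Longrightarrow>
      {x, y} \<in> E \<Longrightarrow> {x, l1} \<in> E \<Longrightarrow> {x, l2} \<in> E \<Longrightarrow> {y, m1} \<in> E \<Longrightarrow> {y, m2} \<in> E \<Longrightarrow> False"
begin

lemma finite_V: "finite V"
  using simple unfolding simple_graph_def by blast

lemma edge_sym: "{a, b} \<in> E \<Longrightarrow> {b, a} \<in> E"
  by (simp add: insert_commute)

lemma edgeD: "{a, b} \<in> E \<Longrightarrow> a \<in> V \<and> b \<in> V \<and> a \<noteq> b"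
  using simple_graph_edgeD[OF simple] by blast

lemma exists_vertex_outside:
  obtains w where "w \<in> V" "w \<notin> {a, b, c, d}"
proof -
  have "card {a, b, c, d} \<le> 4"
    using card_length[of "[a, b, c, d]"] by simp
  then have "\<not> V \<subseteq> {a, b, c, d}"
    using card_mono[of "{a, b, c, d}" V] five by auto
  with that show ?thesis
    by blast
qed

lemma two_edges_avoiding_dominating:
  assumes c0: "\<forall>v \<in> V - {c0}. {c0, v} \<in> E"
    and st: "{s, t} \<in> E" and su: "{s, u} \<in> E" and tu: "t \<noteq> u" and avoid: "c0 \<notin> {s, t, u}"
  shows False
proof -
  obtain w where w: "w \<in> V" "w \<notin> {s, t, u, c0}"
    by (rule exists_vertex_outside)
  have "t \<in> V" "s \<noteq> t" "s \<noteq> u"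
    using edgeD[OF st] edgeD[OF su] by auto
  then have "{t, c0} \<in> E" "{c0, w} \<in> E"
    using c0 avoid w by (auto intro: edge_sym)
  moreover have "distinct [u, s, t, c0, w]"
    using \<open>s \<noteq> t\<close> \<open>s \<noteq> u\<close> tu avoid w by auto
  ultimately show False
    using no_P5[of u s t c0 w] edge_sym[OF su] st by blast
qed

lemma disjoint_edges_avoiding_dominating:
  assumes c0: "\<forall>v \<in> V - {c0}. {c0, v} \<in> E"
    and xy: "{x, y} \<in> E" and pq: "{p, q} \<in> E" and disj: "p \<notin> {x, y}" "q \<notin> {x, y}"
    and avoid: "c0 \<notin> {x, y, p, q}"
  shows False
proof -
  have "x \<in> V" "p \<in> V" "x \<noteq> y" "p \<noteq> q"
    using edgeD[OF xy] edgeD[OF pq] by auto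
  then have "{x, c0} \<in> E" "{c0, p} \<in> E"
    using c0 avoid by (auto intro: edge_sym)
  moreover have "distinct [y, x, c0, p, q]"
    using \<open>x \<noteq> y\<close> \<open>p \<noteq> q\<close> disj avoid by auto
  ultimately show False
    using no_P5[of y x c0 p q] edge_sym[OF xy] pq by blast
qed

lemma edge_avoiding_dominating_unique:
  assumes dom: "\<forall>v \<in> V - {c0}. {c0, v} \<in> E"
    and xy: "{x, y} \<in> E" "c0 \<notin> {x, y}" and pq: "{p, q} \<in> E" "c0 \<notin> {p, q}"
  shows "{p, q} = {x, y}"
proof (rule ccontr)
  assume ne: "{p, q} \<noteq> {x, y}"
  consider "p \<notin> {x, y}" "q \<notin> {x, y}" | "p = x" | "p = y" | "q = x" | "q = y"
    by blast
  then show False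
  proof cases
    case 1
    then show False
      using disjoint_edges_avoiding_dominating[OF dom xy(1) pq(1)] xy(2) pq(2) by blast
  next
    case 2
    with ne pq show False
      using two_edges_avoiding_dominating[OF dom, of x q y] xy by auto
  next
    case 3
    with ne pq show False
      using two_edges_avoiding_dominating[OF dom, of y q x] xy edge_sym by (auto simp: insert_commute)
  next
    case 4
    with ne pq show False
      using two_edges_avoiding_dominating[OF dom, of x p y] xy edge_sym by (auto simp: insert_commute)
  next
    case 5
    with ne pq show False
      using two_edges_avoiding_dominating[OF dom, of y p x] xy edge_sym by (auto simp: insert_commute)
  qed
qed

lemma dominating_vertex:
  assumes c0: "c0 \<in> V" and dom: "\<forall>v \<in> V - {c0}. {c0, v} \<in> E"
  shows "(\<forall>e \<in> E. c0 \<in> e) \<or> graph_iso V E {0..<card V} (Splus_edges (card V))"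
proof (cases "\<forall>e \<in> E. c0 \<in> e")
  case False
  then obtain e where e: "e \<in> E" "c0 \<notin> e"
    by blast
  then obtain x y where "e = {x, y}"
    using simple unfolding simple_graph_def by blast
  with e have xy: "{x, y} \<in> E" "c0 \<notin> {x, y}"
    by simp_all
  have xyV: "x \<in> V" "y \<in> V" "x \<noteq> y"
    using edgeD[OF xy(1)] by auto
  have "{u, v} \<in> E \<longleftrightarrow> (u = c0 \<and> v \<noteq> c0) \<or> (v = c0 \<and> u \<noteq> c0) \<or> {u, v} = {x, y}"
    if "u \<in> V" "v \<in> V" for u v
  proof
    assume e: "{u, v} \<in> E"
    then show "(u = c0 \<and> v \<noteq> c0) \<or> (v = c0 \<and> u \<noteq> c0) \<or> {u, v} = {x, y}"
      using edgeD[OF e] edge_avoiding_dominating_unique[OF dom xy e] by blast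
  next
    assume "(u = c0 \<and> v \<noteq> c0) \<or> (v = c0 \<and> u \<noteq> c0) \<or> {u, v} = {x, y}"
    then show "{u, v} \<in> E"
      using dom that xy(1) edge_sym by auto
  qed
  then have "graph_iso V E {0..<card V} (Splus_edges (card V))"
    using graph_iso_Splus[OF finite_V refl c0 xyV(1,2)] xy(2) xyV(3) by simp
  then show ?thesis ..
qed simp

definition nbrs :: "'a \<Rightarrow> 'a set" where
  "nbrs v = {w \<in> V. {v, w} \<in> E}"

lemma nbrsI: "{v, w} \<in> E \<Longrightarrow> w \<in> nbrs v"
  unfolding nbrs_def using edgeD by blast

lemma nbrsD: "w \<in> nbrs v \<Longrightarrow> {v, w} \<in> E"
  unfolding nbrs_def by blast

lemma finite_nbrs: "finite (nbrs v)"
  unfolding nbrs_def using finite_V by simp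

lemma not_in_own_nbrs: "v \<notin> nbrs v"
  using edgeD nbrsD by blast

lemma small_neighbourhood_shape:
  assumes max: "\<forall>v \<in> V. card (nbrs v) \<le> card (nbrs c0)" and small: "card (nbrs c0) \<le> 2"
    and a: "a \<in> nbrs c0" and b: "b \<notin> nbrs c0" "b \<noteq> c0" and ab: "{a, b} \<in> E"
  obtains y where "nbrs a = {c0, b}" "nbrs c0 = {a, y}" "y \<noteq> a"
proof -
  have "{c0, b} \<subseteq> nbrs a"
    using nbrsI a ab edge_sym nbrsD by blast
  moreover have "card {c0, b} = 2"
    using b by simp
  moreover have "card (nbrs a) \<le> 2"
    using max small edgeD[OF ab] by fastforce
  ultimately have "nbrs a = {c0, b}" and "card (nbrs c0) = 2"
    using card_subset_eq[OF finite_nbrs] card_mono[OF finite_nbrs] max edgeD[OF ab] small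
    by (metis le_antisym)+
  with a that show ?thesis
    by (metis card_2_iff doubleton_eq_iff insertE singletonD)
qed

text \<open>Here y, c0, a, b is a path in which c0 and a have no further neighbours, so the edge through
  which it is left extends it to a path on five vertices.\<close>

lemma small_neighbourhood_impossible:
  assumes c0: "c0 \<in> V" and max: "\<forall>v \<in> V. card (nbrs v) \<le> card (nbrs c0)"
    and small: "card (nbrs c0) \<le> 2"
    and a: "a \<in> nbrs c0" and b: "b \<notin> nbrs c0" "b \<noteq> c0" and ab: "{a, b} \<in> E"
  shows False
proof -
  obtain y where nbrs_a: "nbrs a = {c0, b}" and y: "nbrs c0 = {a, y}" "y \<noteq> a"
    by (rule small_neighbourhood_shape[OF max small a b ab])
  obtain w where w: "w \<in> V" "w \<notin> {c0, a, y, b}"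
    by (rule exists_vertex_outside)
  obtain p q where pq: "{p, q} \<in> E" "p \<in> {c0, a, y, b}" "q \<notin> {c0, a, y, b}"
    by (rule connected_graph_edge_leaving[OF connected c0 _ w(1,2)]) simp
  have dist: "distinct [c0, a, y, b]"
    using y b not_in_own_nbrs[of c0] by auto
  have ya: "{c0, y} \<in> E" "{c0, a} \<in> E"
    using nbrsD y(1) by auto
  from pq(2) consider "p = c0" | "p = a" | "p = y" | "p = b"
    by blast
  then show False
  proof cases
    case 1
    then show False
      using nbrsI[of c0 q] pq y(1) by auto
  next
    case 2
    then show False
      using nbrsI[of a q] pq nbrs_a by auto
  next
    case 3
    then have "distinct [b, a, c0, y, q]"
      using dist pq(3) by auto
    then show False
      using no_P5 edge_sym[OF ab] edge_sym[OF ya(2)] ya(1) pq(1) 3 by blast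
  next
    case 4
    then have "distinct [q, b, a, c0, y]"
      using dist pq(3) by auto
    then show False
      using no_P5 edge_sym[OF pq(1)] edge_sym[OF ab] edge_sym[OF ya(2)] ya(1) 4 by blast
  qed
qed

text \<open>If c0 has at least three neighbours, forbidding paths on five vertices makes every neighbour
  of c0 other than a, and every neighbour of a other than c0, a leaf; forbidding double stars
  leaves a with just one such neighbour b, and connectivity shows that there are no other vertices.\<close>

context
  fixes c0 a b
  assumes c0: "c0 \<in> V" and big: "3 \<le> card (nbrs c0)" and a: "a \<in> nbrs c0"
    and b: "b \<notin> nbrs c0" "b \<noteq> c0" and ab: "{a, b} \<in> E"
begin

lemma nbr_outside:
  obtains z where "z \<in> nbrs c0" "z \<notin> {u, v}"
proof -
  have "card {u, v} \<le> 2"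
    using card_length[of "[u, v]"] by simp
  then have "\<not> nbrs c0 \<subseteq> {u, v}"
    using card_mono[of "{u, v}" "nbrs c0"] big by auto
  with that show ?thesis
    by blast
qed

lemma centre_facts: "{c0, a} \<in> E" "a \<noteq> c0" "a \<noteq> b" "b \<in> V"
  using nbrsD[OF a] edgeD[OF ab] not_in_own_nbrs[of c0] a by auto

lemma leaf_edge:
  assumes z: "z \<in> nbrs c0" "z \<noteq> a" and zw: "{z, w} \<in> E"
  shows "w = c0"
proof (rule ccontr)
  assume wc: "w \<noteq> c0"
  obtain z' where z': "z' \<in> nbrs c0" "z' \<notin> {a, z}"
    by (rule nbr_outside)
  have ez: "{c0, z} \<in> E" "{c0, z'} \<in> E" "z \<noteq> c0" "z' \<noteq> c0" "z \<noteq> b" "z' \<noteq> b" "w \<noteq> z"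
    using nbrsD z z' not_in_own_nbrs[of c0] b edgeD[OF zw] by auto
  consider "w = b" | "w = a" | "w \<noteq> a" "w \<noteq> b"
    by blast
  then show False
  proof cases
    case 1
    then have "distinct [z, b, a, c0, z']"
      using ez z z' b centre_facts by auto
    then show False
      using no_P5 zw 1 edge_sym[OF ab] edge_sym[OF centre_facts(1)] ez(2) by blast
  next
    case 2
    then have "distinct [b, a, z, c0, z']"
      using ez z z' b centre_facts by auto
    then show False
      using no_P5 edge_sym[OF ab] edge_sym[OF zw] 2 edge_sym[OF ez(1)] ez(2) by blast
  next
    case 3
    then have "distinct [b, a, c0, z, w]"
      using ez z wc b centre_facts by auto
    then show False
      using no_P5 edge_sym[OF ab] edge_sym[OF centre_facts(1)] ez(1) zw by blast
  qed
qed

lemma far_not_nbr: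
  assumes "{a, r} \<in> E"
  shows "r \<notin> nbrs c0"
proof
  assume "r \<in> nbrs c0"
  moreover have "r \<noteq> a"
    using edgeD[OF assms] by auto
  ultimately show False
    using leaf_edge[of r a] edge_sym[OF assms] centre_facts(2) by blast
qed

lemma far_edge:
  assumes ar: "{a, r} \<in> E" "r \<noteq> c0" and rw: "{r, w} \<in> E"
  shows "w = a"
proof (rule ccontr)
  assume wa: "w \<noteq> a"
  obtain z where z: "z \<in> nbrs c0" "z \<notin> {a, a}"
    by (rule nbr_outside)
  have "w \<noteq> c0"
    using nbrsI[OF edge_sym[OF rw]] far_not_nbr[OF ar(1)] by blast
  moreover have "w \<notin> nbrs c0"
    using leaf_edge[of w r] edge_sym[OF rw] wa ar(2) by blast
  moreover have "r \<noteq> a" "w \<noteq> r" "z \<noteq> c0" "z \<noteq> r"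
    using edgeD[OF ar(1)] edgeD[OF rw] z not_in_own_nbrs[of c0] far_not_nbr[OF ar(1)] by auto
  ultimately have "distinct [w, r, a, c0, z]"
    using wa z ar(2) centre_facts by auto
  then show False
    using no_P5 edge_sym[OF rw] edge_sym[OF ar(1)] edge_sym[OF centre_facts(1)] nbrsD[OF z(1)] by blast
qed

lemma far_unique:
  assumes ar: "{a, r} \<in> E" "r \<noteq> c0"
  shows "r = b"
proof (rule ccontr)
  assume rb: "r \<noteq> b"
  obtain z1 where z1: "z1 \<in> nbrs c0" "z1 \<notin> {a, a}"
    by (rule nbr_outside)
  obtain z2 where z2: "z2 \<in> nbrs c0" "z2 \<notin> {a, z1}"
    by (rule nbr_outside)
  have "distinct [c0, a, z1, z2, b, r]"
    using z1 z2 rb ar b centre_facts far_not_nbr[OF ar(1)] not_in_own_nbrs[of c0] edgeD[OF ar(1)]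
    by auto
  then show False
    using no_double_star centre_facts(1) nbrsD[OF z1(1)] nbrsD[OF z2(1)] ab ar(1) by blast
qed

lemma vertices_eq: "V = insert c0 (insert b (nbrs c0))"
proof (rule ccontr)
  let ?S = "insert c0 (insert b (nbrs c0))"
  assume "V \<noteq> ?S"
  moreover have "?S \<subseteq> V"
    using c0 centre_facts(4) unfolding nbrs_def by blast
  ultimately obtain v where v: "v \<in> V" "v \<notin> ?S"
    by blast
  obtain p q where pq: "{p, q} \<in> E" "p \<in> ?S" "q \<notin> ?S"
    by (rule connected_graph_edge_leaving[OF connected c0 _ v]) simp
  consider "p = c0" | "p = b" | "p = a" | "p \<in> nbrs c0" "p \<noteq> a"
    using pq(2) by blast
  then show False
  proof cases
    case 1
    then show False
      using nbrsI[of c0 q] pq by auto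
  next
    case 2
    then show False
      using far_edge[OF ab b(2), of q] pq a by auto
  next
    case 3
    then show False
      using far_unique[of q] pq by auto
  next
    case 4
    then show False
      using leaf_edge pq by auto
  qed
qed

lemma G0_iso: "graph_iso V E {0..<card V} (G0_edges (card V))"
proof -
  have aV: "a \<in> V"
    using a unfolding nbrs_def by blast
  have "{u, v} \<in> E \<longleftrightarrow> (u = c0 \<and> v \<notin> {c0, b}) \<or> (v = c0 \<and> u \<notin> {c0, b}) \<or> {u, v} = {a, b}"
    if uv: "u \<in> V" "v \<in> V" for u v
  proof
    assume e: "{u, v} \<in> E"
    have "u = c0 \<or> u = b \<or> u = a \<or> (u \<in> nbrs c0 \<and> u \<noteq> a)"
      using uv(1) vertices_eq by blast
    then show "(u = c0 \<and> v \<notin> {c0, b}) \<or> (v = c0 \<and> u \<notin> {c0, b}) \<or> {u, v} = {a, b}"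
      using e edgeD[OF e] far_edge[OF ab b(2), of v] far_unique[of v] leaf_edge[of u v] nbrsI[of c0 v]
        b centre_facts by (auto simp: insert_commute)
  next
    assume "(u = c0 \<and> v \<notin> {c0, b}) \<or> (v = c0 \<and> u \<notin> {c0, b}) \<or> {u, v} = {a, b}"
    then show "{u, v} \<in> E"
      using uv vertices_eq nbrsD ab edge_sym by auto
  qed
  then show ?thesis
    using graph_iso_G0[OF finite_V refl c0 aV centre_facts(4)] centre_facts b by simp
qed

end

theorem classification:
  "(\<exists>c0 \<in> V. (\<forall>v \<in> V - {c0}. {c0, v} \<in> E) \<and> (\<forall>e \<in> E. c0 \<in> e)) \<or>
    graph_iso V E {0..<card V} (Splus_edges (card V)) \<or> graph_iso V E {0..<card V} (G0_edges (card V))"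
proof -
  let ?deg = "\<lambda>v. card (nbrs v)"
  have "V \<noteq> {}"
    using five by auto
  then have "Max (?deg ` V) \<in> ?deg ` V"
    using finite_V by (intro Max_in) auto
  then obtain c0 where c0: "c0 \<in> V" "?deg c0 = Max (?deg ` V)"
    by auto
  then have max: "\<forall>v \<in> V. ?deg v \<le> ?deg c0"
    using finite_V by simp
  show ?thesis
  proof (cases "V - {c0} \<subseteq> nbrs c0")
    case True
    then have dom: "\<forall>v \<in> V - {c0}. {c0, v} \<in> E"
      using nbrsD by blast
    from dominating_vertex[OF c0(1) this] show ?thesis
      using c0(1) dom by blast
  next
    case False
    then obtain v where v: "v \<in> V" "v \<notin> insert c0 (nbrs c0)"
      by blast
    obtain a b where ab: "{a, b} \<in> E" "a \<in> insert c0 (nbrs c0)" "b \<notin> insert c0 (nbrs c0)"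
      by (rule connected_graph_edge_leaving[OF connected c0(1) _ v]) simp
    then have a: "a \<in> nbrs c0" and b: "b \<notin> nbrs c0" "b \<noteq> c0"
      using nbrsI[of c0 b] by auto
    show ?thesis
    proof (cases "card (nbrs c0) \<le> 2")
      case True
      then show ?thesis
        using small_neighbourhood_impossible[OF c0(1) max True a b ab(1)] by simp
    next
      case False
      then show ?thesis
        using G0_iso[OF c0(1) _ a b ab(1)] by simp
    qed
  qed
qed

end

lemma P5_double_star_free_if_px_gt:
  assumes sg: "simple_graph V E" and cg: "connected_graph V E" and five: "5 \<le> card V"
    and px: "card V - 3 < px k V E"
  shows "P5_double_star_free V E"
proof
  have inV: "a \<in> V" "b \<in> V" if "{a, b} \<in> E" for a b
    using simple_graph_edgeD[OF sg that] by simp_all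
  show False if "distinct [a, b, c, d, e]" "{a, b} \<in> E" "{b, c} \<in> E" "{c, d} \<in> E" "{d, e} \<in> E"
    for a b c d e
  proof -
    have "{a, b, c, d, e} \<subseteq> V"
      using inV[OF that(2)] inV[OF that(4)] inV[OF that(5)] by simp
    from px_le_path5[OF sg cg this that, of k] px show False
      by simp
  qed
  show False if "distinct [x, y, l1, l2, m1, m2]"
    "{x, y} \<in> E" "{x, l1} \<in> E" "{x, l2} \<in> E" "{y, m1} \<in> E" "{y, m2} \<in> E" for x y l1 l2 m1 m2
  proof -
    have "{x, y, l1, l2, m1, m2} \<subseteq> V"
      using inV[OF that(2)] inV[OF that(3)] inV[OF that(4)] inV[OF that(5)] inV[OF that(6)] by simp
    from px_le_double_star[OF sg cg this that, of k] px show False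
      by simp
  qed
qed (use assms in simp_all)

theorem mainTheorem17:
  fixes V :: "'a set" and E :: "'a set set" and n k :: nat
  assumes "simple_graph V E" and "connected_graph V E"
    and "card V = n" and "n \<ge> 5" and "3 \<le> k" and "k \<le> n"
  shows "px k V E = n - 2 \<longleftrightarrow>
    (graph_iso V E {0..<n} (Splus_edges n) \<or> graph_iso V E {0..<n} (G0_edges n))"
proof
  assume "graph_iso V E {0..<n} (Splus_edges n) \<or> graph_iso V E {0..<n} (G0_edges n)"
  then show "px k V E = n - 2"
    using px_eq_if_graph_iso_Splus px_eq_if_graph_iso_G0 assms by blast
next
  assume px: "px k V E = n - 2"
  then interpret P5_double_star_free V E
    using P5_double_star_free_if_px_gt[OF assms(1,2), where k = k] assms(3,4) by simp
  have no_star: False if "c0 \<in> V" "\<forall>v \<in> V - {c0}. {c0, v} \<in> E" "\<forall>e \<in> E. c0 \<in> e" for c0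
    using px_ge_star[OF assms(1,2) _ _ that(1,3,2), of k] px assms(3-6) by simp
  then show "graph_iso V E {0..<n} (Splus_edges n) \<or> graph_iso V E {0..<n} (G0_edges n)"
    using classification assms(3) by blast
qed

end
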